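(* Let $H$ be an abelian group with an alternating $\mathbb{Z}$-bilinear form $\langle-,-\rangle$, let $z\in\ker\mu$, and let $p\ge 2$. Then the composition of the boundary map $\partial_p:C_p(\mathbb{Q}[H])_{(z)}\to C_{p-1}(\mathbb{Q}[H])_{(z)}$ with the quotient projection $C_{p-1}(\mathbb{Q}[H])_{(z)}\to\hat C_{p-1}(\mathbb{Q}[H])_{(z)}$ is the zero map.
   Context: $\mu:H\to\mathrm{Hom}_{\mathbb{Z}}(H,\mathbb{Z})$, $\mu(x)(y)=\langle x,y\rangle$. $\mathbb{Q}[H]$ is the $\mathbb{Q}$-vector space with basis symbols $[x]$, $x\in H$, with Lie bracket $[[x],[y]]=\langle x,y\rangle[x+y]$. Its Chevalley–Eilenberg chain complex is $C_p(\mathbb{Q}[H])=\bigwedge^p_{\mathbb{Q}}\mathbb{Q}[H]$ with $\partial(x_1\wedge\cdots\wedge x_p)=\sum_{i<j}(-1)^{i+j}[x_i,x_j]\wedge x_1\wedge\cdots\widehat{x_i}\cdots\widehat{x_j}\cdots\wedge x_p$. For $p>0$ and $w\in H$, $C_p(\mathbb{Q}[H])_{(w)}$ is the subspace spanned by $[u_1]\wedge\cdots\wedge[u_p]$ with $u_1+\cdots+u_p=w$; these form subcomplexes. Let $\hat I$ be the (two-sided) ideal of the exterior algebra $\bigwedge\mathbb{Q}[H]$ generated by all elements $[u+v]\wedge[x]-[u]\wedge[x+v]-[v]\wedge[x+u]$ with $u,v,x\in H$. Set $\hat I_{p,(w)}=\hat I\cap C_p(\mathbb{Q}[H])_{(w)}$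 and $\hat C_p(\mathbb{Q}[H])_{(w)}=C_p(\mathbb{Q}[H])_{(w)}/\hat I_{p,(w)}$. *)

theory Defs
  imports Complex_Main "HOL-Combinatorics.Permutations"
begin

text \<open>Model of the exterior algebra of the rational vector space Q[H] with basis
 the symbols [x], x in H.  An element is a finitely supported, antisymmetric function
 on lists of elements of H: the value at [u1,...,up] is the coefficient read off
 in degree p (the degree-p part lives on lists of length p).\<close>

definition permute_list :: "'a list \<Rightarrow> (nat \<Rightarrow> nat) \<Rightarrow> 'a list" where
  "permute_list ys \<sigma> = map (\<lambda>i. ys ! \<sigma> i) [0..<length ys]"

definition ext_alg :: "('a list \<Rightarrow> rat) set" where
  "ext_alg = {\<omega>. finite {ys. \<omega> ys \<noteq> 0} \<and>
     (\<forall>ys \<sigma>. \<sigma> permutes {0..<length ys} \<longrightarrow>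
        \<omega> (permute_list ys \<sigma>) = of_int (sign \<sigma>) * \<omega> ys)}"

text \<open>Wedge product (normalised alternation of the tensor product).\<close>
definition wedge :: "('a list \<Rightarrow> rat) \<Rightarrow> ('a list \<Rightarrow> rat) \<Rightarrow> ('a list \<Rightarrow> rat)" where
  "wedge \<omega> \<eta> = (\<lambda>ys. let n = length ys in
     \<Sum>k\<in>{0..n}. \<Sum>\<sigma>\<in>{\<sigma>. \<sigma> permutes {0..<n}}.
       of_int (sign \<sigma>) * \<omega> (take k (permute_list ys \<sigma>)) * \<eta> (drop k (permute_list ys \<sigma>))
       / (fact k * fact (n - k)))"

definition ext_one :: "'a list \<Rightarrow> rat" where
  "ext_one = (\<lambda>ys. if ys = [] then 1 else 0)"

definition gen :: "'a \<Rightarrow> 'a list \<Rightarrow> rat" where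
  "gen x = (\<lambda>ys. if ys = [x] then 1 else 0)"

definition wedge_list :: "'a list \<Rightarrow> 'a list \<Rightarrow> rat" where
  "wedge_list us = foldr (\<lambda>u acc. wedge (gen u) acc) us ext_one"

inductive_set qspan :: "('a list \<Rightarrow> rat) set \<Rightarrow> ('a list \<Rightarrow> rat) set" for S where
  zero: "(\<lambda>_. 0) \<in> qspan S"
| add: "s \<in> S \<Longrightarrow> t \<in> qspan S \<Longrightarrow> (\<lambda>ys. c * s ys + t ys) \<in> qspan S"

definition Cw :: "nat \<Rightarrow> 'a::ab_group_add \<Rightarrow> ('a list \<Rightarrow> rat) set" where
  "Cw p w = qspan {wedge_list us | us. length us = p \<and> sum_list us = w}"

text \<open>Chevalley--Eilenberg boundary, defined on basis wedges and extended linearly.\<close>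
definition remove2 :: "nat \<Rightarrow> nat \<Rightarrow> 'a list \<Rightarrow> 'a list" where
  "remove2 i j us = map (\<lambda>k. us ! k) (filter (\<lambda>k. k \<noteq> i \<and> k \<noteq> j) [0..<length us])"

definition bd_basis :: "('a::ab_group_add \<Rightarrow> 'a \<Rightarrow> int) \<Rightarrow> 'a list \<Rightarrow> 'a list \<Rightarrow> rat" where
  "bd_basis B us = (\<lambda>ys. \<Sum>i<length us. \<Sum>j\<in>{i<..<length us}.
      (-1) ^ (i + j) * of_int (B (us ! i) (us ! j)) *
      wedge (gen (us ! i + us ! j)) (wedge_list (remove2 i j us)) ys)"

text \<open>For \<omega> in degree p, \<omega> = (1/p!) * sum over ys of \<omega>(ys) * wedge_list ys.\<close>
definition boundary :: "('a::ab_group_add \<Rightarrow> 'a \<Rightarrow> int) \<Rightarrow> nat \<Rightarrow> ('a list \<Rightarrow> rat) \<Rightarrow> 'a list \<Rightarrow> rat" where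
  "boundary B p \<omega> = (\<lambda>zs. \<Sum>ys\<in>{ys. length ys = p \<and> \<omega> ys \<noteq> 0}.
      \<omega> ys / fact p * bd_basis B ys zs)"

definition ideal_gens :: "('a::ab_group_add list \<Rightarrow> rat) set" where
  "ideal_gens = {(\<lambda>ys. wedge (gen (u + v)) (gen x) ys - wedge (gen u) (gen (x + v)) ys
                        - wedge (gen v) (gen (x + u)) ys) | u v x. True}"

definition Ihat :: "('a::ab_group_add list \<Rightarrow> rat) set" where
  "Ihat = \<Inter>{J. J \<subseteq> ext_alg \<and> qspan J = J \<and> ideal_gens \<subseteq> J \<and>
              (\<forall>a\<in>ext_alg. \<forall>j\<in>J. wedge a j \<in> J \<and> wedge j a \<in> J)}"

end

theory Submission
  imports Defs
begin

text \<open>Since \<open>\<langle>y\<^sub>m,z\<rangle> = 0\<close>, every row of the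
  antisymmetric matrix \<open>\<langle>y\<^sub>i,y\<^sub>j\<rangle>\<close> sums to zero, so the terms with \<open>i = 0\<close> can be
  redistributed over the pairs \<open>0 < i < j\<close>. Each pair then contributes \<open>\<plusminus>\<langle>y\<^sub>i,y\<^sub>j\<rangle>\<close> times
  \<open>([y\<^sub>i+y\<^sub>j] \<and> [y\<^sub>0] - [y\<^sub>i] \<and> [y\<^sub>0+y\<^sub>j] - [y\<^sub>j] \<and> [y\<^sub>0+y\<^sub>i]) \<and> R\<close>, a generator of \<open>\<hat>I\<close>
  times a wedge \<open>R\<close> of the remaining factors.\<close>

lemma qspan_gen: "s \<in> S \<Longrightarrow> s \<in> qspan S"
  using qspan.add[of s S "\<lambda>_. 0" 1] qspan.zero[of S] by simp

lemma qspan_add: "f \<in> qspan S \<Longrightarrow> g \<in> qspan S \<Longrightarrow> (\<lambda>x. f x + g x) \<in> qspan S"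
proof (induction f rule: qspan.induct)
  case (add s t c)
  have "(\<lambda>x. c * s x + t x + g x) = (\<lambda>x. c * s x + (t x + g x))" by (simp add: add.assoc)
  then show ?case using add by (simp add: qspan.add)
qed simp

lemma qspan_scale: "f \<in> qspan S \<Longrightarrow> (\<lambda>x. c * f x) \<in> qspan S"
proof (induction f rule: qspan.induct)
  case zero then show ?case using qspan.zero by simp
next
  case (add s t d)
  have "(\<lambda>x. c * (d * s x + t x)) = (\<lambda>x. (c * d) * s x + c * t x)" by (simp add: algebra_simps)
  then show ?case using add by (simp add: qspan.add)
qed

lemma qspan_sum: "(\<And>i. i \<in> I \<Longrightarrow> f i \<in> qspan S) \<Longrightarrow> (\<lambda>x. \<Sum>i\<in>I. f i x) \<in> qspan S"
proof (induction I rule: infinite_finite_induct)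
  case (insert i I)
  then show ?case using qspan_add[of "f i" S "\<lambda>x. \<Sum>i\<in>I. f i x"] by simp
qed (use qspan.zero in simp_all)

lemma qspan_support: "\<omega> \<in> qspan S \<Longrightarrow> \<omega> ys \<noteq> 0 \<Longrightarrow> \<exists>s\<in>S. s ys \<noteq> 0"
  by (induction \<omega> rule: qspan.induct) (auto, metis add.right_neutral mult_zero_right)

lemma Defs_permute_list_conv: "Defs.permute_list ys \<sigma> = Permutations.permute_list \<sigma> ys"
  by (simp add: Defs.permute_list_def Permutations.permute_list_def)

lemma Defs_permute_list_length [simp]: "length (Defs.permute_list ys \<sigma>) = length ys"
  by (simp add: Defs.permute_list_def)

lemma Defs_permute_list_nth [simp]: "i < length ys \<Longrightarrow> Defs.permute_list ys \<sigma> ! i = ys ! \<sigma> i"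
  by (simp add: Defs.permute_list_def)

lemma Defs_permute_list_compose:
  assumes "\<tau> permutes {0..<length ys}"
  shows "Defs.permute_list ys (\<sigma> \<circ> \<tau>) = Defs.permute_list (Defs.permute_list ys \<sigma>) \<tau>"
  using assms by (simp add: Defs_permute_list_conv permute_list_compose atLeast0LessThan)

lemma Defs_permute_list_transpose01:
  assumes "length L \<ge> 2"
  shows "Defs.permute_list L (Transposition.transpose 0 1) = L ! 1 # L ! 0 # drop 2 L"
proof (rule nth_equalityI)
  fix i assume i: "i < length (Defs.permute_list L (Transposition.transpose 0 1))"
  consider "i = 0" | "i = 1" | k where "i = Suc (Suc k)"
    by (metis One_nat_def not0_implies_Suc)
  then show "Defs.permute_list L (Transposition.transpose 0 1) ! i = (L ! 1 # L ! 0 # drop 2 L) ! i"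
    by cases (use i assms in auto)
qed (use assms in simp)

definition shift_perm :: "(nat \<Rightarrow> nat) \<Rightarrow> nat \<Rightarrow> nat" where
  "shift_perm \<tau> x = (case x of 0 \<Rightarrow> 0 | Suc y \<Rightarrow> Suc (\<tau> y))"

lemma
  assumes "\<tau> permutes {0..<m}"
  shows permutes_shift_perm: "shift_perm \<tau> permutes {0..<Suc m}"
    and sign_shift_perm: "sign (shift_perm \<tau>) = sign \<tau>"
proof -
  have eq: "shift_perm \<tau> = (\<lambda>x. if x \<in> {1..<Suc m} then Suc (\<tau> (x - 1)) else x)"
  proof
    fix x show "shift_perm \<tau> x = (if x \<in> {1..<Suc m} then Suc (\<tau> (x - 1)) else x)"
      using permutes_not_in[OF assms] by (cases x) (auto simp: shift_perm_def)
  qed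
  interpret permutes_bij_finite \<tau> "{0..<m}" "{1..<Suc m}" Suc "\<lambda>x. x - 1" "shift_perm \<tau>"
    by unfold_locales (auto simp: assms bij_betw_def image_Suc_atLeastLessThan eq)
  show "shift_perm \<tau> permutes {0..<Suc m}"
    using permutes_p' by (auto intro: permutes_subset)
  show "sign (shift_perm \<tau>) = sign \<tau>" using sign_p' by simp
qed

lemma Defs_permute_list_shift_perm:
  assumes "length ys = Suc m" "\<tau> permutes {0..<m}"
  shows "Defs.permute_list ys (\<sigma> \<circ> shift_perm \<tau>) =
    ys ! \<sigma> 0 # Defs.permute_list (drop 1 (Defs.permute_list ys \<sigma>)) \<tau>"
proof (rule nth_equalityI)
  fix i assume i: "i < length (Defs.permute_list ys (\<sigma> \<circ> shift_perm \<tau>))"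
  show "Defs.permute_list ys (\<sigma> \<circ> shift_perm \<tau>) ! i =
      (ys ! \<sigma> 0 # Defs.permute_list (drop 1 (Defs.permute_list ys \<sigma>)) \<tau>) ! i"
  proof (cases i)
    case (Suc k)
    have "k < m" using i Suc assms by simp
    moreover have "\<tau> k < m" using permutes_in_image[OF assms(2)] \<open>k < m\<close> by simp
    ultimately show ?thesis using Suc assms by (simp add: shift_perm_def)
  qed (use i in \<open>simp add: shift_perm_def\<close>)
qed (use assms in simp)

section \<open>Basis wedges\<close>

text \<open>The factorials normalising \<open>wedge\<close> are exactly what makes \<open>wedge_list us\<close> equal to this
  signed count of permutations carrying \<open>ys\<close> to \<open>us\<close>.\<close>
definition wedge_coeff :: "'a list \<Rightarrow> 'a list \<Rightarrow> rat" where
  "wedge_coeff us ys = (if length ys = length us then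
     (\<Sum>\<sigma>\<in>{\<sigma>. \<sigma> permutes {0..<length ys}}.
        of_int (sign \<sigma>) * (if Defs.permute_list ys \<sigma> = us then 1 else 0))
     else 0)"

lemma wedge_gen_Nil: "wedge (gen a) \<psi> [] = 0"
  by (simp add: wedge_def gen_def Defs.permute_list_def)

lemma wedge_gen_eq:
  assumes "ys \<noteq> []"
  shows "wedge (gen a) \<psi> ys =
    (\<Sum>\<sigma>\<in>{\<sigma>. \<sigma> permutes {0..<length ys}}. of_int (sign \<sigma>) * (if ys ! \<sigma> 0 = a then 1 else 0)
        * \<psi> (drop 1 (Defs.permute_list ys \<sigma>))) / fact (length ys - 1)"
proof -
  define n where "n = length ys"
  have n: "n \<ge> 1" using assms by (cases ys) (auto simp: n_def)
  have take_gen: "gen a (take k (Defs.permute_list ys \<sigma>)) =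
      (if k = 1 then (if ys ! \<sigma> 0 = a then 1 else 0) else 0)" if k: "k \<le> n" for k \<sigma>
  proof -
    obtain x xs where L: "Defs.permute_list ys \<sigma> = x # xs"
      using assms by (cases "Defs.permute_list ys \<sigma>") (auto simp: Defs.permute_list_def)
    have "x = ys ! \<sigma> 0"
      using L assms by (metis length_greater_0_conv Defs_permute_list_length nth_Cons_0 Defs_permute_list_nth)
    moreover have "length xs = n - 1" using L by (simp add: n_def flip: Defs_permute_list_length[of ys \<sigma>])
    ultimately have "take k (Defs.permute_list ys \<sigma>) = [a] \<longleftrightarrow> k = 1 \<and> ys ! \<sigma> 0 = a"
      using L k n by (cases k) auto
    then show ?thesis by (auto simp: gen_def)
  qed
  have "wedge (gen a) \<psi> ys = (\<Sum>k\<in>{0..n}. if k = 1 then (\<Sum>\<sigma>\<in>{\<sigma>. \<sigma> permutes {0..<n}}.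
       of_int (sign \<sigma>) * (if ys ! \<sigma> 0 = a then 1 else 0) * \<psi> (drop 1 (Defs.permute_list ys \<sigma>))
       / (fact 1 * fact (n - 1))) else 0)"
    unfolding wedge_def Let_def n_def[symmetric]
    by (intro sum.cong refl) (auto simp: take_gen simp del: One_nat_def)
  also have "\<dots> = (\<Sum>\<sigma>\<in>{\<sigma>. \<sigma> permutes {0..<n}}.
       of_int (sign \<sigma>) * (if ys ! \<sigma> 0 = a then 1 else 0) * \<psi> (drop 1 (Defs.permute_list ys \<sigma>))
       / (fact 1 * fact (n - 1)))"
    using n by (subst sum.delta) auto
  also have "\<dots> = (\<Sum>\<sigma>\<in>{\<sigma>. \<sigma> permutes {0..<n}}. of_int (sign \<sigma>) * (if ys ! \<sigma> 0 = a then 1 else 0)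
        * \<psi> (drop 1 (Defs.permute_list ys \<sigma>))) / fact (n - 1)"
    by (simp add: sum_divide_distrib)
  finally show ?thesis by (simp add: n_def)
qed

lemma wedge_coeff_Cons_term:
  assumes m: "length ys = Suc m" "length us = m" and \<sigma>: "\<sigma> permutes {0..<Suc m}"
  shows "of_int (sign \<sigma>) * (if ys ! \<sigma> 0 = a then 1 else 0) * wedge_coeff us (drop 1 (Defs.permute_list ys \<sigma>))
    = (\<Sum>\<tau>\<in>{\<tau>. \<tau> permutes {0..<m}}. of_int (sign (\<sigma> \<circ> shift_perm \<tau>)) *
        (if Defs.permute_list ys (\<sigma> \<circ> shift_perm \<tau>) = a # us then 1 else 0))"
proof -
  have "length (drop 1 (Defs.permute_list ys \<sigma>)) = m" using m(1) by simp
  then have coeff: "wedge_coeff us (drop 1 (Defs.permute_list ys \<sigma>)) = (\<Sum>\<tau>\<in>{\<tau>. \<tau> permutes {0..<m}}.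
      of_int (sign \<tau>) * (if Defs.permute_list (drop 1 (Defs.permute_list ys \<sigma>)) \<tau> = us then 1 else 0))"
    unfolding wedge_coeff_def m(2) by (simp only: refl[THEN eqTrueI] if_True)
  show ?thesis
    unfolding coeff sum_distrib_left
  proof (intro sum.cong refl)
    fix \<tau> assume "\<tau> \<in> {\<tau>. \<tau> permutes {0..<m}}"
    then have \<tau>: "\<tau> permutes {0..<m}" by simp
    have "sign (\<sigma> \<circ> shift_perm \<tau>) = sign \<sigma> * sign \<tau>"
      using sign_compose[OF permutes_imp_permutation[OF _ \<sigma>]
          permutes_imp_permutation[OF _ permutes_shift_perm[OF \<tau>]]]
      by (simp add: sign_shift_perm[OF \<tau>])
    then show "of_int (sign \<sigma>) * (if ys ! \<sigma> 0 = a then 1 else 0) *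
        (of_int (sign \<tau>) * (if Defs.permute_list (drop 1 (Defs.permute_list ys \<sigma>)) \<tau> = us then 1 else 0))
        = of_int (sign (\<sigma> \<circ> shift_perm \<tau>)) *
          (if Defs.permute_list ys (\<sigma> \<circ> shift_perm \<tau>) = a # us then 1 else (0::rat))"
      by (simp add: Defs_permute_list_shift_perm[OF m(1) \<tau>])
  qed
qed

lemma wedge_gen_wedge_coeff: "wedge (gen a) (wedge_coeff us) = wedge_coeff (a # us)"
proof
  fix ys :: "'a list"
  show "wedge (gen a) (wedge_coeff us) ys = wedge_coeff (a # us) ys"
  proof (cases "length ys = Suc (length us)")
    case False
    then have "length ys - 1 \<noteq> length us" if "ys \<noteq> []" using that by (cases ys) auto
    with False show ?thesis
      by (cases "ys = []") (auto simp: wedge_gen_Nil wedge_gen_eq wedge_coeff_def)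
  next
    case True
    define m where "m = length us"
    have m: "length ys = Suc m" using True by (simp add: m_def)
    define P where "P n = {\<sigma>::nat\<Rightarrow>nat. \<sigma> permutes {0..<n}}" for n
    define g where "g \<pi> = of_int (sign \<pi>) * (if Defs.permute_list ys \<pi> = a # us then 1 else 0 :: rat)" for \<pi>
    have "wedge (gen a) (wedge_coeff us) ys = (\<Sum>\<sigma>\<in>P (Suc m). of_int (sign \<sigma>) *
        (if ys ! \<sigma> 0 = a then 1 else 0) * wedge_coeff us (drop 1 (Defs.permute_list ys \<sigma>))) / fact m"
      using m by (subst wedge_gen_eq) (auto simp: P_def)
    also have "\<dots> = (\<Sum>\<sigma>\<in>P (Suc m). \<Sum>\<tau>\<in>P m. g (\<sigma> \<circ> shift_perm \<tau>)) / fact m"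
      using wedge_coeff_Cons_term[OF m m_def[symmetric]]
      by (intro arg_cong[where f="\<lambda>x. x / fact m"] sum.cong) (auto simp: P_def g_def)
    also have "\<dots> = (\<Sum>\<tau>\<in>P m. \<Sum>\<sigma>\<in>P (Suc m). g (\<sigma> \<circ> shift_perm \<tau>)) / fact m"
      by (subst sum.swap) simp
    also have "\<dots> = (\<Sum>\<tau>\<in>P m. \<Sum>\<pi>\<in>P (Suc m). g \<pi>) / fact m"
    proof -
      have "(\<Sum>\<sigma>\<in>P (Suc m). g (\<sigma> \<circ> shift_perm \<tau>)) = (\<Sum>\<pi>\<in>P (Suc m). g \<pi>)" if "\<tau> \<in> P m" for \<tau>
        using permutes_shift_perm[of \<tau> m] that unfolding P_def
        by (subst sum_permutations_compose_right[of "shift_perm \<tau>"]) auto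
      then show ?thesis by simp
    qed
    also have "\<dots> = (\<Sum>\<pi>\<in>P (Suc m). g \<pi>)"
      by (simp add: P_def card_permutations)
    also have "\<dots> = wedge_coeff (a # us) ys"
      using m by (simp add: wedge_coeff_def P_def g_def m_def)
    finally show ?thesis .
  qed
qed

lemma wedge_list_Cons: "wedge_list (a # us) = wedge (gen a) (wedge_list us)"
  by (simp add: wedge_list_def)

lemma wedge_list_eq_wedge_coeff: "wedge_list us = wedge_coeff us"
proof (induction us)
  case Nil
  have "{\<sigma>. \<sigma> permutes {0..<0::nat}} = {id}" by auto
  then show ?case
    by (auto simp: wedge_list_def ext_one_def wedge_coeff_def Defs.permute_list_def)
next
  case (Cons a us)
  then show ?case by (simp add: wedge_list_Cons wedge_gen_wedge_coeff)
qed

lemma wedge_linear_right: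
  "wedge \<omega> (\<lambda>x. c * f x + d * g x) ys = c * wedge \<omega> f ys + d * wedge \<omega> g ys"
proof -
  have distrib: "A * (c * x + d * y) / D = c * (A * x / D) + d * (A * y / D)" for A x y D :: rat
    by (simp add: algebra_simps add_divide_distrib)
  show ?thesis
    unfolding wedge_def Let_def by (simp only: distrib sum.distrib sum_distrib_left)
qed

lemma wedge_scale_right: "wedge \<omega> (\<lambda>x. c * f x) ys = c * wedge \<omega> f ys"
  using wedge_linear_right[of \<omega> c f 0 f ys] by simp

lemma wedge_diff_right: "wedge \<omega> (\<lambda>x. f x - g x) ys = wedge \<omega> f ys - wedge \<omega> g ys"
  using wedge_linear_right[of \<omega> 1 f "-1" g ys] by simp

lemma wedge_coeff_swap: "wedge_coeff (a # b # R) ys = - wedge_coeff (b # a # R) ys"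
proof (cases "length ys = length R + 2")
  case False then show ?thesis by (simp add: wedge_coeff_def)
next
  case True
  define t where "t = Transposition.transpose (0::nat) 1"
  have t: "t permutes {0..<length ys}" using True unfolding t_def by (intro permutes_swap_id) auto
  have swap_iff: "Defs.permute_list ys (\<sigma> \<circ> t) = a # b # R \<longleftrightarrow> Defs.permute_list ys \<sigma> = b # a # R"
    for \<sigma>
  proof -
    define L where "L = Defs.permute_list ys \<sigma>"
    have "length L = length R + 2" using True by (simp add: L_def)
    then obtain x y R' where L: "L = x # y # R'" by (metis Suc_length_conv add_2_eq_Suc')
    have "Defs.permute_list ys (\<sigma> \<circ> t) = Defs.permute_list L t"
      using Defs_permute_list_compose[OF t] by (simp add: L_def)
    also have "\<dots> = y # x # R'" using Defs_permute_list_transpose01[of L] L by (simp add: t_def)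
    finally show ?thesis using L by (auto simp: L_def)
  qed
  have "wedge_coeff (a # b # R) ys = (\<Sum>\<sigma>\<in>{\<sigma>. \<sigma> permutes {0..<length ys}}.
      of_int (sign \<sigma>) * (if Defs.permute_list ys \<sigma> = a # b # R then 1 else 0))"
    using True by (simp add: wedge_coeff_def)
  also have "\<dots> = (\<Sum>\<sigma>\<in>{\<sigma>. \<sigma> permutes {0..<length ys}}.
      of_int (sign (\<sigma> \<circ> t)) * (if Defs.permute_list ys (\<sigma> \<circ> t) = a # b # R then 1 else 0))"
    by (rule sum_permutations_compose_right[OF t])
  also have "\<dots> = (\<Sum>\<sigma>\<in>{\<sigma>. \<sigma> permutes {0..<length ys}}.
      - (of_int (sign \<sigma>) * (if Defs.permute_list ys \<sigma> = b # a # R then 1 else 0)))"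
  proof (intro sum.cong refl)
    fix \<sigma> assume "\<sigma> \<in> {\<sigma>. \<sigma> permutes {0..<length ys}}"
    then have \<sigma>: "\<sigma> permutes {0..<length ys}" by simp
    have "sign (\<sigma> \<circ> t) = - sign \<sigma>"
      using sign_compose[OF permutes_imp_permutation[OF _ \<sigma>] permutes_imp_permutation[OF _ t]]
      by (simp add: t_def sign_swap_id)
    then show "of_int (sign (\<sigma> \<circ> t)) * (if Defs.permute_list ys (\<sigma> \<circ> t) = a # b # R then 1 else 0)
        = - (of_int (sign \<sigma>) * (if Defs.permute_list ys \<sigma> = b # a # R then 1 else 0 :: rat))"
      by (simp add: swap_iff)
  qed
  also have "\<dots> = - wedge_coeff (b # a # R) ys" using True by (simp add: wedge_coeff_def sum_negf)
  finally show ?thesis .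
qed

lemma wedge_list_swap: "wedge_list (a # b # R) ys = - wedge_list (b # a # R) ys"
  unfolding wedge_list_eq_wedge_coeff by (rule wedge_coeff_swap)

definition remove_nth :: "nat \<Rightarrow> 'a list \<Rightarrow> 'a list" where
  "remove_nth k M = take k M @ drop (Suc k) M"

lemma wedge_list_move_to_front:
  "k < length M \<Longrightarrow> wedge_list M ys = (-1) ^ k * wedge_list (M ! k # remove_nth k M) ys"
proof (induction k arbitrary: M ys)
  case 0
  then obtain m M' where "M = m # M'" by (cases M) auto
  then show ?case by (simp add: remove_nth_def)
next
  case (Suc k)
  then obtain m M' where M: "M = m # M'" by (cases M) auto
  have "wedge_list M' = (\<lambda>zs. (-1) ^ k * wedge_list (M' ! k # remove_nth k M') zs)"
    using Suc M by (intro ext Suc.IH) simp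
  then have "wedge_list M ys = (-1) ^ k * wedge_list (m # M' ! k # remove_nth k M') ys"
    by (simp add: M wedge_list_Cons wedge_scale_right)
  also have "\<dots> = (-1) ^ Suc k * wedge_list (M' ! k # m # remove_nth k M') ys"
    by (subst wedge_list_swap) simp
  also have "M' ! k # m # remove_nth k M' = M ! Suc k # remove_nth (Suc k) M"
    by (simp add: M remove_nth_def)
  finally show ?case .
qed

lemma wedge_list_snoc_pair: "wedge_list (R @ [a, b]) ys = wedge_list (a # b # R) ys"
proof -
  have "wedge_list (R @ [a]) = (\<lambda>ys. (-1) ^ length R * wedge_list (a # R) ys)"
    using wedge_list_move_to_front[of "length R" "R @ [a]"] by (intro ext) (simp add: nth_append remove_nth_def)
  then have "wedge_list (b # R @ [a]) ys = (-1) ^ length R * wedge_list (b # a # R) ys"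
    by (simp add: wedge_list_Cons wedge_scale_right)
  moreover have "wedge_list (R @ [a, b]) ys = (-1) ^ Suc (length R) * wedge_list (b # R @ [a]) ys"
    using wedge_list_move_to_front[of "Suc (length R)" "R @ [a, b]" ys]
    by (simp add: nth_append remove_nth_def)
  ultimately show ?thesis
    using wedge_list_swap[of b a R ys] by (simp add: power_add[symmetric])
qed

lemma gen_eq_wedge_list: "gen x = wedge_list [x]"
proof
  fix ys :: "'a list"
  show "gen x ys = wedge_list [x] ys"
  proof (cases "length ys = 1")
    case True
    then obtain y where ys: "ys = [y]" by (cases ys) auto
    have "{\<sigma>. \<sigma> permutes {0..<Suc 0}} = {id}"
      by (auto simp: permutes_sing[of _ 0, simplified])
    then show ?thesis by (simp add: wedge_list_eq_wedge_coeff wedge_coeff_def ys gen_def Defs.permute_list_def)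
  qed (auto simp: wedge_list_eq_wedge_coeff wedge_coeff_def gen_def)
qed

lemma wedge_list_support: "wedge_list us ys \<noteq> 0 \<Longrightarrow> mset ys = mset us"
proof -
  assume "wedge_list us ys \<noteq> 0"
  then obtain \<sigma> where \<sigma>: "\<sigma> permutes {0..<length ys}" "Defs.permute_list ys \<sigma> = us"
    unfolding wedge_list_eq_wedge_coeff wedge_coeff_def
    by (auto split: if_splits elim!: sum.not_neutral_contains_not_neutral)
  have "mset (Permutations.permute_list \<sigma> ys) = mset ys"
    using \<sigma>(1) by (intro mset_permute_list) (simp add: atLeast0LessThan)
  then show ?thesis using \<sigma>(2) by (simp add: Defs_permute_list_conv)
qed

lemma sum_list_support_Cw:
  assumes "\<omega> \<in> Cw p z" "\<omega> ys \<noteq> 0"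
  shows "sum_list ys = z"
proof -
  obtain us where "length us = p" "sum_list us = z" "wedge_list us ys \<noteq> 0"
    using qspan_support[OF assms[unfolded Cw_def]] by blast
  then show ?thesis by (metis wedge_list_support sum_mset_sum_list)
qed

definition sel :: "(nat \<Rightarrow> bool) \<Rightarrow> 'a list \<Rightarrow> 'a list" where
  "sel P ys = map ((!) ys) (filter P [0..<length ys])"

lemma remove2_eq_sel: "remove2 i j us = sel (\<lambda>k. k \<noteq> i \<and> k \<noteq> j) us"
  by (simp add: remove2_def sel_def)

lemma length_sel: "length (sel P ys) = card {k. k < length ys \<and> P k}"
  unfolding sel_def length_map length_filter_conv_card by (intro arg_cong[where f=card]) auto

lemma sum_list_sel: "sum_list (sel P ys) = (\<Sum>k\<in>{k. k < length ys \<and> P k}. ys ! k)"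
proof -
  have "sum_list (sel P ys) = sum ((!) ys) (set (filter P [0..<length ys]))"
    unfolding sel_def by (rule sum_list_distinct_conv_sum_set) simp
  also have "set (filter P [0..<length ys]) = {k. k < length ys \<and> P k}" by auto
  finally show ?thesis .
qed

lemma upt_split_at: "j < n \<Longrightarrow> [0..<n] = [0..<j] @ j # [Suc j..<n]"
  using upt_add_eq_append[of 0 j "n - j"] by (simp add: upt_conv_Cons)

lemma wedge_list_sel_move:
  assumes "P j" "j < length ys"
  shows "wedge_list (c # sel P ys) zs =
    (-1) ^ card {k. k < j \<and> P k} * wedge_list (c # ys ! j # sel (\<lambda>k. P k \<and> k \<noteq> j) ys) zs"
proof -
  define F1 where "F1 = filter P [0..<j]"
  define F2 where "F2 = filter P [Suc j..<length ys]"
  have split_P: "filter P [0..<length ys] = F1 @ j # F2"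
    using assms upt_split_at[OF assms(2)] by (simp add: F1_def F2_def)
  have split_P_j: "filter (\<lambda>k. P k \<and> k \<noteq> j) [0..<length ys] = F1 @ F2"
  proof -
    have "filter (\<lambda>k. P k \<and> k \<noteq> j) [0..<j] = F1" unfolding F1_def by (intro filter_cong) auto
    moreover have "filter (\<lambda>k. P k \<and> k \<noteq> j) [Suc j..<length ys] = F2"
      unfolding F2_def by (intro filter_cong) auto
    ultimately show ?thesis using upt_split_at[OF assms(2)] by simp
  qed
  define M where "M = sel P ys"
  define k where "k = length F1"
  have card_k: "card {k. k < j \<and> P k} = k"
    unfolding k_def F1_def length_filter_conv_card by (intro arg_cong[where f=card]) auto
  have M: "M ! k = ys ! j" "remove_nth k M = sel (\<lambda>k. P k \<and> k \<noteq> j) ys" "k < length M"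
    by (simp_all add: M_def sel_def split_P split_P_j k_def remove_nth_def nth_append)
  have "wedge_list M = (\<lambda>zs. (-1) ^ k * wedge_list (M ! k # remove_nth k M) zs)"
    by (intro ext wedge_list_move_to_front M)
  then show ?thesis
    by (simp add: M_def[symmetric] card_k M wedge_list_Cons wedge_scale_right)
qed

lemma
  fixes ys :: "'a::ab_group_add list"
  assumes "i < j" "j < length ys"
  shows length_remove2: "length (remove2 i j ys) = length ys - 2"
    and sum_list_remove2: "sum_list (remove2 i j ys) = sum_list ys - ys ! i - ys ! j"
proof -
  have indices: "{k. k < length ys \<and> k \<noteq> i \<and> k \<noteq> j} = {..<length ys} - {i} - {j}" by auto
  show "length (remove2 i j ys) = length ys - 2"
    unfolding remove2_eq_sel length_sel indices using assms by (simp add: card_Diff_singleton_if)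
  have "sum_list ys = (\<Sum>k<length ys. ys ! k)"
    by (simp add: sum_list_sum_nth atLeast0LessThan)
  also have "\<dots> = ys ! i + ys ! j + (\<Sum>k\<in>{..<length ys} - {i} - {j}. ys ! k)"
    using assms by (simp add: sum.remove[of _ i] sum.remove[of _ j] add.assoc)
  finally show "sum_list (remove2 i j ys) = sum_list ys - ys ! i - ys ! j"
    unfolding remove2_eq_sel sum_list_sel indices by (simp add: algebra_simps)
qed

section \<open>The ideal \<open>\<hat>I\<close>\<close>

lemma gen_in_ext_alg: "gen r \<in> ext_alg"
proof -
  have "gen r (Defs.permute_list ys \<sigma>) = of_int (sign \<sigma>) * gen r ys"
    if "\<sigma> permutes {0..<length ys}" for ys \<sigma>
  proof (cases "length ys = 1")
    case True
    then have "\<sigma> = id" using that by (simp add: permutes_sing[of _ 0, simplified])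
    then show ?thesis by (simp add: Defs.permute_list_def map_nth)
  next
    case False
    then have "Defs.permute_list ys \<sigma> \<noteq> [r]" "ys \<noteq> [r]"
      by (metis Defs_permute_list_length length_Cons list.size(3) One_nat_def)+
    then show ?thesis by (simp add: gen_def)
  qed
  moreover have "{ys. gen r ys \<noteq> 0} = {[r]}" by (auto simp: gen_def)
  ultimately show ?thesis by (simp add: ext_alg_def)
qed

definition wedge_ideal :: "('a::ab_group_add list \<Rightarrow> rat) set \<Rightarrow> bool" where
  "wedge_ideal J \<longleftrightarrow> J \<subseteq> ext_alg \<and> qspan J = J \<and> ideal_gens \<subseteq> J \<and>
     (\<forall>a\<in>ext_alg. \<forall>j\<in>J. wedge a j \<in> J \<and> wedge j a \<in> J)"

lemma IhatI:
  assumes "\<And>J. wedge_ideal J \<Longrightarrow> f \<in> J"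
  shows "f \<in> Ihat"
  unfolding Ihat_def using assms by (intro InterI) (simp add: wedge_ideal_def)

lemma qspan_wedge_ideal: "wedge_ideal J \<Longrightarrow> qspan J = J"
  by (simp add: wedge_ideal_def)

lemma wedge_ideal_wedge_left: "wedge_ideal J \<Longrightarrow> a \<in> ext_alg \<Longrightarrow> j \<in> J \<Longrightarrow> wedge a j \<in> J"
  unfolding wedge_ideal_def by blast

lemma relation_snoc_in_ideal:
  assumes J: "wedge_ideal J"
  shows "(\<lambda>ys. wedge_list (R @ [u + v, x]) ys - wedge_list (R @ [u, x + v]) ys
     - wedge_list (R @ [v, x + u]) ys) \<in> J"
proof (induction R)
  case Nil
  have "(\<lambda>ys. wedge (gen (u + v)) (gen x) ys - wedge (gen u) (gen (x + v)) ys
      - wedge (gen v) (gen (x + u)) ys) \<in> ideal_gens"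
    unfolding ideal_gens_def by blast
  moreover have "ideal_gens \<subseteq> J" using J by (simp add: wedge_ideal_def)
  ultimately show ?case by (auto simp only: wedge_list_Cons[of _ "[_]"] gen_eq_wedge_list append_Nil)
next
  case (Cons r R)
  have "wedge (gen r) (\<lambda>ys. wedge_list (R @ [u + v, x]) ys - wedge_list (R @ [u, x + v]) ys
     - wedge_list (R @ [v, x + u]) ys) \<in> J"
    by (rule wedge_ideal_wedge_left[OF J gen_in_ext_alg Cons.IH])
  moreover have "wedge (gen r) (\<lambda>ys. wedge_list (R @ [u + v, x]) ys - wedge_list (R @ [u, x + v]) ys
     - wedge_list (R @ [v, x + u]) ys) = (\<lambda>ys. wedge_list ((r # R) @ [u + v, x]) ys
     - wedge_list ((r # R) @ [u, x + v]) ys - wedge_list ((r # R) @ [v, x + u]) ys)"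
    by (rule ext) (simp add: wedge_diff_right wedge_list_Cons)
  ultimately show ?case by simp
qed

lemma relation_in_ideal:
  "wedge_ideal J \<Longrightarrow> (\<lambda>ys. wedge_list ((u + v) # x # R) ys - wedge_list (u # (x + v) # R) ys
     - wedge_list (v # (x + u) # R) ys) \<in> J"
  using relation_snoc_in_ideal[of J R u v x] by (simp only: wedge_list_snoc_pair)

section \<open>The boundary of a basis wedge\<close>

text \<open>Here \<open>a\<close> plays the role of the matrix \<open>\<langle>y\<^sub>i,y\<^sub>j\<rangle>\<close>; its rows sum to zero because
  \<open>\<Sum>\<^sub>k y\<^sub>k = z\<close> lies in the kernel of the form.\<close>
lemma row_tail_sum:
  fixes a :: "nat \<Rightarrow> nat \<Rightarrow> rat"
  assumes anti: "\<And>i j. a i j = - a j i" and row: "\<And>m. m < n \<Longrightarrow> (\<Sum>k<n. a m k) = 0"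
    and i: "i \<in> {1..<n}"
  shows "(\<Sum>j\<in>{1..<n}. a i j) = a 0 i"
proof -
  have "(\<Sum>k<n. a i k) = a i 0 + (\<Sum>j\<in>{1..<n}. a i j)"
    using i by (simp add: lessThan_atLeast0 sum.atLeast_Suc_lessThan)
  then show ?thesis using row[of i] anti[of i 0] i by simp
qed

lemma first_row_redistribute:
  fixes a :: "nat \<Rightarrow> nat \<Rightarrow> rat" and w :: "nat \<Rightarrow> rat"
  assumes anti: "\<And>i j. a i j = - a j i" and row: "\<And>m. m < n \<Longrightarrow> (\<Sum>k<n. a m k) = 0"
  shows "(\<Sum>j\<in>{1..<n}. a 0 j * w j) = (\<Sum>i\<in>{1..<n}. \<Sum>j\<in>{i<..<n}. a i j * (w i - w j))"
proof -
  define S where "S = {1..<n}"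
  have upper: "(\<Sum>j\<in>{i<..<n}. f j) = (\<Sum>j\<in>S. if i < j then f j else 0)" if "i \<in> S"
    for i and f :: "nat \<Rightarrow> rat"
  proof -
    have "{j \<in> S. i < j} = {i<..<n}" using that by (auto simp: S_def)
    then show ?thesis by (simp add: sum.inter_filter[symmetric] S_def)
  qed
  have column: "(\<Sum>j\<in>S. (if i < j then a i j else 0) - (if j < i then a j i else 0)) = a 0 i"
    if "i \<in> S" for i
  proof -
    have "(if i < j then a i j else 0) - (if j < i then a j i else 0) = a i j" for j
      using anti[of j i] anti[of i i] by (cases "i < j"; cases "j < i") auto
    then show ?thesis using row_tail_sum[OF anti row] that by (simp add: S_def)
  qed
  have "(\<Sum>i\<in>S. \<Sum>j\<in>{i<..<n}. a i j * (w i - w j)) =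
      (\<Sum>i\<in>S. \<Sum>j\<in>S. if i < j then a i j * (w i - w j) else 0)"
    by (intro sum.cong refl upper)
  also have "\<dots> = (\<Sum>i\<in>S. \<Sum>j\<in>S. if i < j then a i j * w i else 0)
      - (\<Sum>i\<in>S. \<Sum>j\<in>S. if i < j then a i j * w j else 0)"
    by (simp add: sum_subtractf[symmetric] algebra_simps if_distrib cong: if_cong)
  also have "(\<Sum>i\<in>S. \<Sum>j\<in>S. if i < j then a i j * w j else 0)
      = (\<Sum>i\<in>S. \<Sum>j\<in>S. if j < i then a j i * w i else 0)"
    by (rule sum.swap)
  also have "(\<Sum>i\<in>S. \<Sum>j\<in>S. if i < j then a i j * w i else 0)
      - (\<Sum>i\<in>S. \<Sum>j\<in>S. if j < i then a j i * w i else 0)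
      = (\<Sum>i\<in>S. w i * (\<Sum>j\<in>S. (if i < j then a i j else 0) - (if j < i then a j i else 0)))"
    unfolding sum_subtractf[symmetric] sum_distrib_left by (intro sum.cong refl) (auto simp: algebra_simps)
  also have "\<dots> = (\<Sum>i\<in>S. a 0 i * w i)"
    by (intro sum.cong refl) (simp add: column)
  finally show ?thesis by (simp add: S_def)
qed

lemma alternating_pair_sum_regroup:
  fixes a W :: "nat \<Rightarrow> nat \<Rightarrow> rat"
  assumes anti: "\<And>i j. a i j = - a j i" and row: "\<And>m. m < n \<Longrightarrow> (\<Sum>k<n. a m k) = 0"
  shows "(\<Sum>i<n. \<Sum>j\<in>{i<..<n}. (-1) ^ (i + j) * a i j * W i j) =
    (\<Sum>i\<in>{1..<n}. \<Sum>j\<in>{i<..<n}.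
        a i j * ((-1) ^ i * W 0 i - (-1) ^ j * W 0 j + (-1) ^ (i + j) * W i j))"
proof (cases "n = 0")
  case False
  have "(\<Sum>i<n. \<Sum>j\<in>{i<..<n}. (-1) ^ (i + j) * a i j * W i j) =
      (\<Sum>j\<in>{0<..<n}. (-1) ^ (0 + j) * a 0 j * W 0 j)
      + (\<Sum>i\<in>{1..<n}. \<Sum>j\<in>{i<..<n}. (-1) ^ (i + j) * a i j * W i j)"
    using False by (simp add: lessThan_atLeast0 sum.atLeast_Suc_lessThan)
  also have "(\<Sum>j\<in>{0<..<n}. (-1) ^ (0 + j) * a 0 j * W 0 j) = (\<Sum>j\<in>{1..<n}. a 0 j * ((-1) ^ j * W 0 j))"
    by (rule sum.cong) (auto simp: algebra_simps)
  also have "\<dots> = (\<Sum>i\<in>{1..<n}. \<Sum>j\<in>{i<..<n}. a i j * ((-1) ^ i * W 0 i - (-1) ^ j * W 0 j))"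
    by (rule first_row_redistribute[OF anti row])
  finally show ?thesis by (simp add: sum.distrib[symmetric] algebra_simps)
qed simp

lemma boundary_pair_terms_eq_relation:
  fixes ys zs :: "'a::ab_group_add list"
  assumes ij: "0 < i" "i < j" "j < length ys"
  defines "W \<equiv> \<lambda>i j. wedge_list ((ys ! i + ys ! j) # remove2 i j ys) zs"
    and "R \<equiv> sel (\<lambda>k. k \<noteq> 0 \<and> k \<noteq> i \<and> k \<noteq> j) ys"
  shows "(-1) ^ i * W 0 i - (-1) ^ j * W 0 j + (-1) ^ (i + j) * W i j =
     (-1) ^ (i + j) * (wedge_list ((ys ! i + ys ! j) # ys ! 0 # R) zs
        - wedge_list (ys ! i # (ys ! 0 + ys ! j) # R) zs
        - wedge_list (ys ! j # (ys ! 0 + ys ! i) # R) zs)"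
proof -
  have R: "sel (\<lambda>k. (k \<noteq> 0 \<and> k \<noteq> i) \<and> k \<noteq> j) ys = R"
    "sel (\<lambda>k. (k \<noteq> 0 \<and> k \<noteq> j) \<and> k \<noteq> i) ys = R"
    "sel (\<lambda>k. (k \<noteq> i \<and> k \<noteq> j) \<and> k \<noteq> 0) ys = R"
    unfolding R_def by (metis (no_types, lifting))+
  have "{k. k < j \<and> (k \<noteq> 0 \<and> k \<noteq> i)} = {1..<j} - {i}" "{k. k < i \<and> (k \<noteq> 0 \<and> k \<noteq> j)} = {1..<i}"
    using ij by auto
  then have card: "card {k. k < j \<and> (k \<noteq> 0 \<and> k \<noteq> i)} = j - 2"
    "card {k. k < i \<and> (k \<noteq> 0 \<and> k \<noteq> j)} = i - 1"
    using ij by simp_all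
  define A where "A = wedge_list ((ys ! 0 + ys ! i) # ys ! j # R) zs"
  define B where "B = wedge_list ((ys ! 0 + ys ! j) # ys ! i # R) zs"
  define C where "C = wedge_list ((ys ! i + ys ! j) # ys ! 0 # R) zs"
  have W0i: "W 0 i = (-1) ^ (j - 2) * A"
    unfolding W_def remove2_eq_sel A_def
    using wedge_list_sel_move[of "\<lambda>k. k \<noteq> 0 \<and> k \<noteq> i" j ys "ys ! 0 + ys ! i" zs] ij card(1) R(1)
    by simp
  have W0j: "W 0 j = (-1) ^ (i - 1) * B"
    unfolding W_def remove2_eq_sel B_def
    using wedge_list_sel_move[of "\<lambda>k. k \<noteq> 0 \<and> k \<noteq> j" i ys "ys ! 0 + ys ! j" zs] ij card(2) R(2)
    by simp
  have Wij: "W i j = C"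
    unfolding W_def remove2_eq_sel C_def
    using wedge_list_sel_move[of "\<lambda>k. k \<noteq> i \<and> k \<noteq> j" 0 ys "ys ! i + ys ! j" zs] ij R(3)
    by (cases ys) auto
  have "i = Suc (i - 1)" "j = Suc (Suc (j - 2))" using ij by simp_all
  then obtain i' j' where "i = Suc i'" "j = Suc (Suc j')" by blast
  then have "(-1::rat) ^ i * ((-1) ^ (j - 2) * A) - (-1) ^ j * ((-1) ^ (i - 1) * B) + (-1) ^ (i + j) * C
      = (-1) ^ (i + j) * (C - (- B) - (- A))"
    by (simp add: algebra_simps power_add)
  then show ?thesis
    unfolding W0i W0j Wij A_def B_def C_def
    by (simp only: wedge_list_swap[of "ys ! i" "ys ! 0 + ys ! j"] wedge_list_swap[of "ys ! j" "ys ! 0 + ys ! i"])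
qed

lemma bd_basis_in_Cw:
  assumes "length ys = p" "sum_list ys = z"
  shows "bd_basis B ys \<in> Cw (p - 1) z"
  unfolding bd_basis_def Cw_def
proof (intro qspan_sum qspan_scale[where f="\<lambda>zs. _ zs"])
  fix i j assume "i \<in> {..<length ys}" "j \<in> {i<..<length ys}"
  then have "length ((ys ! i + ys ! j) # remove2 i j ys) = p - 1"
    "sum_list ((ys ! i + ys ! j) # remove2 i j ys) = z"
    using length_remove2[of i j ys] sum_list_remove2[of i j ys] assms by auto
  then have "wedge_list ((ys ! i + ys ! j) # remove2 i j ys) \<in>
      qspan {wedge_list us | us. length us = p - 1 \<and> sum_list us = z}"
    by (blast intro: qspan_gen)
  then show "wedge (gen (ys ! i + ys ! j)) (wedge_list (remove2 i j ys)) \<in>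
      qspan {wedge_list us | us. length us = p - 1 \<and> sum_list us = z}"
    by (simp add: wedge_list_Cons)
qed

lemma boundary_in_qspan:
  assumes "\<And>ys. length ys = p \<Longrightarrow> \<omega> ys \<noteq> 0 \<Longrightarrow> bd_basis B ys \<in> qspan S"
  shows "boundary B p \<omega> \<in> qspan S"
  unfolding boundary_def using assms by (intro qspan_sum qspan_scale[where f="\<lambda>zs. _ zs"]) auto

locale alternating_form =
  fixes B :: "'a::ab_group_add \<Rightarrow> 'a \<Rightarrow> int"
  assumes add_left: "\<And>x y w. B (x + y) w = B x w + B y w"
    and add_right: "\<And>x y w. B w (x + y) = B w x + B w y"
    and alternating: "\<And>x. B x x = 0"
begin

lemma antisym: "B x y = - B y x"
proof -
  have "0 = B (x + y) (x + y)" using alternating by simp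
  also have "\<dots> = B x x + B x y + (B y x + B y y)" by (simp add: add_left add_right)
  finally show ?thesis using alternating by simp
qed

lemma sum_list_right: "B w (sum_list xs) = (\<Sum>k<length xs. B w (xs ! k))"
proof -
  have "B w 0 = 0" using add_right[of w 0 0] by simp
  then have "B w (sum_list xs) = sum_list (map (B w) xs)"
    by (induction xs) (simp_all add: add_right)
  then show ?thesis by (simp add: sum_list_sum_nth atLeast0LessThan)
qed

lemma sum_row_eq_zero:
  assumes "\<And>y. B z y = 0" and "sum_list ys = z"
  shows "(\<Sum>k<length ys. B (ys ! m) (ys ! k)) = 0"
  using assms antisym[of "ys ! m" z] sum_list_right[of "ys ! m" ys] by simp

lemma bd_basis_in_ideal:
  assumes z_ker: "\<And>y. B z y = 0" and J: "wedge_ideal J" and weight: "sum_list ys = z"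
  shows "bd_basis B ys \<in> J"
proof -
  define n where "n = length ys"
  define a where "a i j = (of_int (B (ys ! i) (ys ! j)) :: rat)" for i j
  define R where "R i j = sel (\<lambda>k. k \<noteq> 0 \<and> k \<noteq> i \<and> k \<noteq> j) ys" for i j
  define G where "G i j = (\<lambda>zs. wedge_list ((ys ! i + ys ! j) # ys ! 0 # R i j) zs
        - wedge_list (ys ! i # (ys ! 0 + ys ! j) # R i j) zs
        - wedge_list (ys ! j # (ys ! 0 + ys ! i) # R i j) zs)" for i j
  have anti: "a i j = - a j i" for i j
    unfolding a_def using antisym[of "ys ! i" "ys ! j"] by simp
  have row: "(\<Sum>k<n. a m k) = 0" for m
    unfolding a_def n_def of_int_sum[symmetric] sum_row_eq_zero[OF z_ker weight] by simp
  have eq: "bd_basis B ys = (\<lambda>zs. \<Sum>i\<in>{1..<n}. \<Sum>j\<in>{i<..<n}. (a i j * (-1) ^ (i + j)) * G i j zs)"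
  proof
    fix zs
    define W where "W i j = wedge_list ((ys ! i + ys ! j) # remove2 i j ys) zs" for i j
    have "bd_basis B ys zs = (\<Sum>i<n. \<Sum>j\<in>{i<..<n}. (-1) ^ (i + j) * a i j * W i j)"
      unfolding bd_basis_def a_def W_def n_def by (simp add: wedge_list_Cons)
    also have "\<dots> = (\<Sum>i\<in>{1..<n}. \<Sum>j\<in>{i<..<n}.
        a i j * ((-1) ^ i * W 0 i - (-1) ^ j * W 0 j + (-1) ^ (i + j) * W i j))"
      by (rule alternating_pair_sum_regroup[OF anti row])
    also have "\<dots> = (\<Sum>i\<in>{1..<n}. \<Sum>j\<in>{i<..<n}. (a i j * (-1) ^ (i + j)) * G i j zs)"
    proof (intro sum.cong refl)
      fix i j assume "i \<in> {1..<n}" "j \<in> {i<..<n}"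
      then show "a i j * ((-1) ^ i * W 0 i - (-1) ^ j * W 0 j + (-1) ^ (i + j) * W i j)
          = (a i j * (-1) ^ (i + j)) * G i j zs"
        using boundary_pair_terms_eq_relation[of i j ys zs] unfolding W_def G_def R_def n_def by simp
    qed
    finally show "bd_basis B ys zs = (\<Sum>i\<in>{1..<n}. \<Sum>j\<in>{i<..<n}. (a i j * (-1) ^ (i + j)) * G i j zs)" .
  qed
  have "G i j \<in> J" for i j
    unfolding G_def using relation_in_ideal[OF J, of "ys ! i" "ys ! j" "ys ! 0" "R i j"]
    by (simp add: add.commute)
  then have "bd_basis B ys \<in> qspan J"
    unfolding eq by (intro qspan_sum qspan_scale[where f="\<lambda>zs. _ zs"] qspan_gen)
  then show ?thesis using qspan_wedge_ideal[OF J] by simp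
qed

end

theorem proposition3p1:
  fixes B :: "'a::ab_group_add \<Rightarrow> 'a \<Rightarrow> int" and z :: 'a and p :: nat
  assumes bil_left: "\<And>x y w. B (x + y) w = B x w + B y w"
    and bil_right: "\<And>x y w. B w (x + y) = B w x + B w y"
    and alt: "\<And>x. B x x = 0"
    and z_ker: "\<And>y. B z y = 0"
    and p: "p \<ge> 2"
  shows "\<forall>\<omega> \<in> Cw p z. boundary B p \<omega> \<in> Ihat \<inter> Cw (p - 1) z"
proof (intro ballI IntI)
  interpret alternating_form B
    using bil_left bil_right alt by unfold_locales
  fix \<omega> assume \<omega>: "\<omega> \<in> Cw p z"
  have weight: "sum_list ys = z" if "\<omega> ys \<noteq> 0" for ys
    using sum_list_support_Cw[OF \<omega> that] .
  show "boundary B p \<omega> \<in> Cw (p - 1) z"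
    unfolding Cw_def using bd_basis_in_Cw[of _ p z B, unfolded Cw_def] weight
    by (intro boundary_in_qspan) simp
  show "boundary B p \<omega> \<in> Ihat"
  proof (rule IhatI)
    fix J :: "('a list \<Rightarrow> rat) set" assume J: "wedge_ideal J"
    have "boundary B p \<omega> \<in> qspan J"
      using bd_basis_in_ideal[OF z_ker J] weight by (intro boundary_in_qspan qspan_gen) simp
    then show "boundary B p \<omega> \<in> J" using qspan_wedge_ideal[OF J] by simp
  qed
qed

end
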